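(* Let $(\Omega,\mathcal F,\mathcal P)$ be pre-Hahn-localizable with localization $\mathcal Q$. Then (1) $\mathcal F^{\mathcal P}=\mathcal F^{\mathcal Q}$, and (2) $(\Omega,\mathcal F^{\mathcal P},\mathcal P)$ (measures extended to $\mathcal F^{\mathcal P}$) is pre-Hahn-localizable. Moreover, if $(\Omega,\mathcal F,\mathcal P)$ is Hahn-localizable with a localization having pairwise disjoint supports, then $(\Omega,\mathcal F^{\mathcal P},\mathcal P)$ is Hahn-localizable.
   Context: $\mathcal P$ is a family of probability measures on $\mathcal F$. For a probability measure $P$, $\mathcal F^P=\{F\cup Z:F\in\mathcal F, Z\subseteq N \text{ for some } N\in\mathcal F,P(N)=0\}$, and for a family $\mathcal R$, $\mathcal F^{\mathcal R}=\bigcap_{R\in\mathcal R}\mathcal F^R$; each measure extends uniquely to its completion and hence to $\mathcal F^{\mathcal R}$. $\mathcal A\lll\mathcal B$ means every $A\in\mathcal A$ is absolutely continuous w.r.t. some $B\in\mathcal B$; $\mathrm{sconv}$ denotes countable convex combinations. $\mathcal P$ is pre-Hahn-localizable if there are a family $\mathcal Q$ of probability measures on $\mathcal F$ (localization) and sets $S_Q\in\mathcal F$ (supports) with $Q(S_R)=\delta_{QR}$ for $Q,R\in\mathcal Q$ and $\mathcal Q\lll\mathcal P\lll\mathrm{sconv}(\mathcal Q)$. It is Hahn-localizable if this holds with, in addition: for every family $E_Q\in\mathcal F$, $E_Q\subseteq S_Q$, there is $S\in\mathcal F$ with $Q(E_Q\setminus S)=0$ for all $Q$, and such that any $F\in\mathcal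 F$ with $Q(E_Q\setminus F)=0$ for all $Q$ satisfies $Q(S\setminus F)=0$ for all $Q$. *)

theory Defs
  imports "HOL-Probability.Probability"
begin

text \<open>The base measurable space (Omega, F) is represented by a measure M0 (only its space
  and sets are used). A family of probability measures on F is a set of measures.\<close>

definition prob_family :: "'a measure \<Rightarrow> 'a measure set \<Rightarrow> bool" where
  "prob_family M0 P \<longleftrightarrow>
     (\<forall>p\<in>P. prob_space p \<and> space p = space M0 \<and> sets p = sets M0)"

definition compl_sets :: "'a measure \<Rightarrow> 'a measure set \<Rightarrow> 'a set set" where
  "compl_sets M0 R = {A. A \<subseteq> space M0 \<and> (\<forall>r\<in>R. A \<in> sets (completion r))}"

definition compl_space :: "'a measure \<Rightarrow> 'a measure set \<Rightarrow> 'a measure" where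
  "compl_space M0 R = sigma (space M0) (compl_sets M0 R)"

definition ext_measure :: "'a measure \<Rightarrow> 'a measure set \<Rightarrow> 'a measure \<Rightarrow> 'a measure" where
  "ext_measure M0 R p = measure_of (space M0) (compl_sets M0 R) (emeasure (completion p))"

text \<open>A \<lll> B: every a in A is absolutely continuous w.r.t. some b in B.
  (Library: absolutely_continuous b a means null_sets b \<subseteq> null_sets a, i.e. a << b.)\<close>

definition lll :: "'a measure set \<Rightarrow> 'a measure set \<Rightarrow> bool" where
  "lll A B \<longleftrightarrow> (\<forall>a\<in>A. \<exists>b\<in>B. absolutely_continuous b a)"

definition sconv :: "'a measure \<Rightarrow> 'a measure set \<Rightarrow> 'a measure set" where
  "sconv M0 Q = {R. space R = space M0 \<and> sets R = sets M0 \<and>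
     (\<exists>c :: nat \<Rightarrow> real. \<exists>q :: nat \<Rightarrow> 'a measure.
        (\<forall>n. q n \<in> Q) \<and> (\<forall>n. 0 \<le> c n) \<and> c sums 1 \<and>
        (\<forall>A\<in>sets M0. emeasure R A = (\<Sum>n. ennreal (c n) * emeasure (q n) A)))}"

definition localization ::
  "'a measure \<Rightarrow> 'a measure set \<Rightarrow> 'a measure set \<Rightarrow> ('a measure \<Rightarrow> 'a set) \<Rightarrow> bool" where
  "localization M0 P Q S \<longleftrightarrow>
     prob_family M0 Q \<and>
     (\<forall>q\<in>Q. S q \<in> sets M0) \<and>
     (\<forall>q\<in>Q. \<forall>r\<in>Q. emeasure q (S r) = (if q = r then 1 else 0)) \<and>
     lll Q P \<and> lll P (sconv M0 Q)"

definition pre_hahn_localizable :: "'a measure \<Rightarrow> 'a measure set \<Rightarrow> bool" where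
  "pre_hahn_localizable M0 P \<longleftrightarrow> prob_family M0 P \<and> (\<exists>Q S. localization M0 P Q S)"

definition hahn_localization ::
  "'a measure \<Rightarrow> 'a measure set \<Rightarrow> 'a measure set \<Rightarrow> ('a measure \<Rightarrow> 'a set) \<Rightarrow> bool" where
  "hahn_localization M0 P Q S \<longleftrightarrow>
     localization M0 P Q S \<and>
     (\<forall>E :: 'a measure \<Rightarrow> 'a set.
        (\<forall>q\<in>Q. E q \<in> sets M0 \<and> E q \<subseteq> S q) \<longrightarrow>
        (\<exists>T\<in>sets M0. (\<forall>q\<in>Q. emeasure q (E q - T) = 0) \<and>
           (\<forall>F\<in>sets M0. (\<forall>q\<in>Q. emeasure q (E q - F) = 0) \<longrightarrow>
              (\<forall>q\<in>Q. emeasure q (T - F) = 0))))"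

definition hahn_localizable :: "'a measure \<Rightarrow> 'a measure set \<Rightarrow> bool" where
  "hahn_localizable M0 P \<longleftrightarrow> prob_family M0 P \<and> (\<exists>Q S. hahn_localization M0 P Q S)"

end

theory Submission
  imports Defs
begin

text \<open>Completion is monotone along absolute continuity and is preserved by countable convex
  combinations. Since \<open>Q \<lll> P \<lll> sconv Q\<close>, the families \<open>P\<close> and \<open>Q\<close> therefore have the same
  completed \<sigma>-algebra, every measure involved extends to it, and the localization with its
  supports carries over verbatim.

  For the Hahn property, disjoint supports make the essential supremum \<open>T\<close> of sets
  \<open>E\<^sub>q \<subseteq> S\<^sub>q\<close> agree with each \<open>E\<^sub>q\<close> up to a \<open>q\<close>-null set. This a.e. gluing property only
  mentions null sets, so it passes to the completion by approximating each \<open>E\<^sub>q\<close> from inside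
  by an \<open>F\<close>-measurable set, and it implies the Hahn property again.\<close>

lemma completion_sandwichE:
  assumes "A \<in> sets (completion M)"
  obtains L U where "L \<in> sets M" "U \<in> sets M" "L \<subseteq> A" "A \<subseteq> U" "U - L \<in> null_sets M"
proof -
  obtain L N N' where "A = L \<union> N" "N \<subseteq> N'" "N' \<in> null_sets M" "L \<in> sets M"
    using sets_completionE[OF assms] by metis
  moreover have "L \<union> N' - L \<in> null_sets M"
    by (rule null_sets_subset[of N']) (use \<open>N' \<in> null_sets M\<close> \<open>L \<in> sets M\<close> in auto)
  ultimately show ?thesis
    by (intro that[of L "L \<union> N'"]) auto
qed

lemma
  assumes "L \<in> sets M" "L \<subseteq> A" "A \<subseteq> U" "U - L \<in> null_sets M"
  shows sets_completion_sandwich: "A \<in> sets (completion M)"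
    and emeasure_completion_sandwich: "emeasure (completion M) A = emeasure M L"
proof -
  show "A \<in> sets (completion M)"
    using assms by (intro sets_completionI[of A L "A - L" "U - L"]) auto
  have null: "A - L \<in> null_sets (completion M)"
    unfolding null_sets_completion_iff2 using assms by (intro bexI[of _ "U - L"]) auto
  have "A = L \<union> (A - L)"
    using assms(2) by blast
  then have "emeasure (completion M) A = emeasure (completion M) (L \<union> (A - L))"
    by simp
  also have "\<dots> = emeasure (completion M) L"
    using assms(1) null by (intro emeasure_Un_null_set) auto
  also have "\<dots> = emeasure M L"
    using assms(1) by simp
  finally show "emeasure (completion M) A = emeasure M L" .
qed

lemma null_sets_completion_absolutely_continuous:
  assumes "absolutely_continuous M N"
  shows "null_sets (completion M) \<subseteq> null_sets (completion N)"
proof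
  fix A assume "A \<in> null_sets (completion M)"
  then obtain X where "X \<in> null_sets M" "A \<subseteq> X"
    unfolding null_sets_completion_iff2 by blast
  with assms show "A \<in> null_sets (completion N)"
    unfolding absolutely_continuous_def null_sets_completion_iff2 by blast
qed

lemma sets_completion_absolutely_continuous:
  assumes "absolutely_continuous M N" "sets N = sets M"
  shows "sets (completion M) \<subseteq> sets (completion N)"
proof
  fix A assume "A \<in> sets (completion M)"
  then obtain L X X' where "A = L \<union> X" "X \<subseteq> X'" "X' \<in> null_sets M" "L \<in> sets M"
    by (rule sets_completionE)
  with assms show "A \<in> sets (completion N)"
    by (intro sets_completionI[of A L X X']) (auto simp: absolutely_continuous_def)
qed

lemma completion_countable_mixture:
  fixes c :: "nat \<Rightarrow> ennreal"
  assumes sets_q: "\<And>n. sets (q n) = sets R"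
    and emeasure_R: "\<And>B. B \<in> sets R \<Longrightarrow> emeasure R B = (\<Sum>n. c n * emeasure (q n) B)"
    and A: "\<And>n. A \<in> sets (completion (q n))"
  shows "A \<in> sets (completion R)"
    and "emeasure (completion R) A = (\<Sum>n. c n * emeasure (completion (q n)) A)"
proof -
  have "\<exists>L U. L \<in> sets R \<and> U \<in> sets R \<and> L \<subseteq> A \<and> A \<subseteq> U \<and> U - L \<in> null_sets (q n)" for n
  proof (rule completion_sandwichE[OF A[of n]])
    fix L U assume "L \<in> sets (q n)" "U \<in> sets (q n)" "L \<subseteq> A" "A \<subseteq> U" "U - L \<in> null_sets (q n)"
    then show ?thesis
      using sets_q[of n] by auto
  qed
  then obtain L U where LU: "\<And>n. L n \<in> sets R" "\<And>n. U n \<in> sets R" "\<And>n. L n \<subseteq> A" "\<And>n. A \<subseteq> U n"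
    "\<And>n. U n - L n \<in> null_sets (q n)"
    by metis
  define L' where "L' = (\<Union>n. L n)"
  define U' where "U' = (\<Inter>n. U n)"
  have L': "L' \<in> sets R" "L' \<subseteq> A" and U': "U' \<in> sets R" "A \<subseteq> U'"
    unfolding L'_def U'_def using LU(1,2) LU(3,4)[THEN subsetD] by auto
  have null_q: "U' - L' \<in> null_sets (q n)" for n
    by (rule null_sets_subset[OF LU(5)]) (use L' U' sets_q in \<open>auto simp: L'_def U'_def\<close>)
  have "emeasure R (U' - L') = 0"
    using emeasure_R[of "U' - L'"] L' U' null_q by (simp add: null_setsD1)
  then have null_R: "U' - L' \<in> null_sets R"
    using L' U' by (intro null_setsI) auto
  show "A \<in> sets (completion R)"
    using sets_completion_sandwich[OF L'(1,2) U'(2) null_R] .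
  have "emeasure (completion R) A = emeasure R L'"
    using emeasure_completion_sandwich[OF L'(1,2) U'(2) null_R] .
  also have "\<dots> = (\<Sum>n. c n * emeasure (q n) L')"
    using emeasure_R L' by simp
  also have "\<dots> = (\<Sum>n. c n * emeasure (completion (q n)) A)"
    using emeasure_completion_sandwich[OF _ L'(2) U'(2) null_q] L'(1) sets_q by simp
  finally show "emeasure (completion R) A = (\<Sum>n. c n * emeasure (completion (q n)) A)" .
qed

lemma sigma_algebra_compl_sets:
  assumes "\<And>r. r \<in> R \<Longrightarrow> space r = space M0"
  shows "sigma_algebra (space M0) (compl_sets M0 R)"
  unfolding sigma_algebra_iff2
proof (intro conjI ballI allI impI)
  show "compl_sets M0 R \<subseteq> Pow (space M0)" "{} \<in> compl_sets M0 R"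
    by (auto simp: compl_sets_def)
next
  fix A assume A: "A \<in> compl_sets M0 R"
  have "space M0 - A \<in> sets (completion r)" if "r \<in> R" for r
    using A that sets.compl_sets[of A "completion r"] assms[OF that] by (simp add: compl_sets_def)
  with A show "space M0 - A \<in> compl_sets M0 R"
    by (auto simp: compl_sets_def)
next
  fix A :: "nat \<Rightarrow> _" assume "range A \<subseteq> compl_sets M0 R"
  then show "(\<Union>i. A i) \<in> compl_sets M0 R"
    by (auto simp: compl_sets_def intro!: sets.countable_UN'')
qed

lemma
  assumes "\<And>r. r \<in> R \<Longrightarrow> space r = space M0"
  shows sets_compl_space: "sets (compl_space M0 R) = compl_sets M0 R"
    and space_compl_space: "space (compl_space M0 R) = space M0"
  using sigma_algebra.sets_measure_of_eq[OF sigma_algebra_compl_sets[OF assms]]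
    sigma_algebra.space_measure_of_eq[OF sigma_algebra_compl_sets[OF assms]]
  by (simp_all add: compl_space_def)

lemma sets_subset_compl_sets:
  assumes "\<And>r. r \<in> R \<Longrightarrow> sets r = sets M0"
  shows "sets M0 \<subseteq> compl_sets M0 R"
  using assms sets.sets_into_space[of _ M0] by (auto simp: compl_sets_def)

lemma space_in_compl_sets:
  assumes "\<And>r. r \<in> R \<Longrightarrow> space r = space M0"
  shows "space M0 \<in> compl_sets M0 R"
proof -
  have "space M0 \<in> sets (completion r)" if "r \<in> R" for r
    using sets.top[of "completion r"] assms[OF that] by simp
  then show ?thesis
    by (simp add: compl_sets_def)
qed

context
  fixes M0 :: "'a measure" and R :: "'a measure set" and p :: "'a measure"
  assumes space_R: "\<And>r. r \<in> R \<Longrightarrow> space r = space M0"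
    and compl_sets_p: "compl_sets M0 R \<subseteq> sets (completion p)"
begin

lemma sets_ext_measure: "sets (ext_measure M0 R p) = compl_sets M0 R"
  and space_ext_measure: "space (ext_measure M0 R p) = space M0"
  using sigma_algebra.sets_measure_of_eq[OF sigma_algebra_compl_sets[OF space_R]]
    sigma_algebra.space_measure_of_eq[OF sigma_algebra_compl_sets[OF space_R]]
  by (simp_all add: ext_measure_def)

lemma emeasure_ext_measure:
  assumes "A \<in> compl_sets M0 R"
  shows "emeasure (ext_measure M0 R p) A = emeasure (completion p) A"
  unfolding ext_measure_def
proof (rule emeasure_measure_of_sigma[OF sigma_algebra_compl_sets[OF space_R] _ _ assms])
  show "positive (compl_sets M0 R) (emeasure (completion p))"
    by (simp add: positive_def)
  show "countably_additive (compl_sets M0 R) (emeasure (completion p))"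
    using compl_sets_p by (auto simp: countably_additive_def intro!: suminf_emeasure)
qed

lemma null_sets_ext_measure:
  "null_sets (ext_measure M0 R p) = compl_sets M0 R \<inter> null_sets (completion p)"
  using emeasure_ext_measure compl_sets_p by (auto simp: sets_ext_measure null_sets_def)

lemma prob_space_ext_measure:
  assumes "prob_space p" "space p = space M0"
  shows "prob_space (ext_measure M0 R p)"
proof
  have "emeasure (completion p) (space p) = emeasure p (space p)"
    using sets.top[of p] by simp
  then show "emeasure (ext_measure M0 R p) (space (ext_measure M0 R p)) = 1"
    using emeasure_ext_measure[OF space_in_compl_sets[OF space_R]] prob_space.emeasure_space_1[OF assms(1)]
    by (simp add: space_ext_measure assms(2))
qed

end

lemma inj_on_ext_measure:
  assumes "\<And>r. r \<in> R \<Longrightarrow> space r = space M0 \<and> sets r = sets M0"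
    and "\<And>p. p \<in> X \<Longrightarrow> sets p = sets M0 \<and> compl_sets M0 R \<subseteq> sets (completion p)"
  shows "inj_on (ext_measure M0 R) X"
proof (rule inj_onI)
  fix p p' assume p: "p \<in> X" "p' \<in> X" and eq: "ext_measure M0 R p = ext_measure M0 R p'"
  show "p = p'"
  proof (rule measure_eqI)
    show "sets p = sets p'" using assms(2) p by simp
    fix A assume "A \<in> sets p"
    then have "A \<in> sets M0" "A \<in> compl_sets M0 R"
      using assms p sets_subset_compl_sets[of R M0] by auto
    then show "emeasure p A = emeasure p' A"
      using emeasure_ext_measure[of R M0 p A] emeasure_ext_measure[of R M0 p' A] assms p eq by simp
  qed
qed

lemma absolutely_continuous_ext_measure:
  assumes "\<And>r. r \<in> R \<Longrightarrow> space r = space M0"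
    and "compl_sets M0 R \<subseteq> sets (completion a)" "compl_sets M0 R \<subseteq> sets (completion b)"
    and "absolutely_continuous b a"
  shows "absolutely_continuous (ext_measure M0 R b) (ext_measure M0 R a)"
  using null_sets_completion_absolutely_continuous[OF assms(4)] assms(1-3)
  by (auto simp: absolutely_continuous_def null_sets_ext_measure)

lemma prob_familyD:
  assumes "prob_family M P" "p \<in> P"
  shows "prob_space p" "space p = space M" "sets p = sets M"
  using assms by (auto simp: prob_family_def)

lemma lll_subset: "lll A B \<Longrightarrow> B \<subseteq> C \<Longrightarrow> lll A C"
  unfolding lll_def by blast

lemma compl_sets_antimono_lll:
  assumes "lll A B" "\<And>a. a \<in> A \<Longrightarrow> sets a = sets M0" "\<And>b. b \<in> B \<Longrightarrow> sets b = sets M0"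
  shows "compl_sets M0 B \<subseteq> compl_sets M0 A"
proof
  fix X assume X: "X \<in> compl_sets M0 B"
  have "X \<in> sets (completion a)" if "a \<in> A" for a
  proof -
    obtain b where "b \<in> B" "absolutely_continuous b a"
      using assms(1) \<open>a \<in> A\<close> by (auto simp: lll_def)
    with X assms(2,3) \<open>a \<in> A\<close> show ?thesis
      using sets_completion_absolutely_continuous[of b a] by (auto simp: compl_sets_def)
  qed
  with X show "X \<in> compl_sets M0 A"
    by (simp add: compl_sets_def)
qed

lemma sconvE:
  assumes "R \<in> sconv M0 Q"
  obtains q c where "space R = space M0" "sets R = sets M0" "\<And>n. q n \<in> Q" "\<And>n. 0 \<le> c n"
    "c sums 1" "\<And>A. A \<in> sets M0 \<Longrightarrow> emeasure R A = (\<Sum>n. ennreal (c n) * emeasure (q n) A)"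
  using assms unfolding sconv_def by blast

lemma compl_sets_subset_sconv:
  assumes "\<And>q. q \<in> Q \<Longrightarrow> sets q = sets M0"
  shows "compl_sets M0 Q \<subseteq> compl_sets M0 (sconv M0 Q)"
proof
  fix A assume A: "A \<in> compl_sets M0 Q"
  have "A \<in> sets (completion R)" if "R \<in> sconv M0 Q" for R
  proof (rule sconvE[OF that])
    fix q c assume "sets R = sets M0" "\<And>n. q n \<in> Q"
      "\<And>A. A \<in> sets M0 \<Longrightarrow> emeasure R A = (\<Sum>n. ennreal (c n) * emeasure (q n) A)"
    with A assms show ?thesis
      by (intro completion_countable_mixture(1)[of q R]) (auto simp: compl_sets_def)
  qed
  with A show "A \<in> compl_sets M0 (sconv M0 Q)"
    by (simp add: compl_sets_def)
qed

lemma compl_sets_localization: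
  assumes "prob_family M0 P" "localization M0 P Q S"
  shows "compl_sets M0 P = compl_sets M0 Q"
proof -
  have sets_Q: "sets q = sets M0" if "q \<in> Q" for q
    using assms(2) that by (auto simp: localization_def prob_family_def)
  have sets_P: "sets p = sets M0" if "p \<in> P" for p
    using prob_familyD(3)[OF assms(1) that] .
  have sets_sconv: "sets R = sets M0" if "R \<in> sconv M0 Q" for R
    using that by (auto simp: sconv_def)
  have "compl_sets M0 P \<subseteq> compl_sets M0 Q"
    using assms(2) sets_P sets_Q by (intro compl_sets_antimono_lll) (auto simp: localization_def)
  moreover have "compl_sets M0 Q \<subseteq> compl_sets M0 (sconv M0 Q)"
    using compl_sets_subset_sconv sets_Q .
  moreover have "\<dots> \<subseteq> compl_sets M0 P"
    using assms(2) sets_P sets_sconv by (intro compl_sets_antimono_lll) (auto simp: localization_def)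
  ultimately show ?thesis
    by blast
qed

lemma prob_family_ext_measure:
  assumes "prob_family M0 P" "prob_family M0 X" "\<And>p. p \<in> X \<Longrightarrow> compl_sets M0 P \<subseteq> sets (completion p)"
  shows "prob_family (compl_space M0 P) (ext_measure M0 P ` X)"
  using assms prob_space_ext_measure[of P M0] prob_familyD[OF assms(1)] prob_familyD[OF assms(2)]
  by (auto simp: prob_family_def sets_ext_measure space_ext_measure sets_compl_space space_compl_space)

lemma lll_ext_measure:
  assumes "\<And>r. r \<in> R \<Longrightarrow> space r = space M0" "lll A B"
    and "\<And>m. m \<in> A \<union> B \<Longrightarrow> compl_sets M0 R \<subseteq> sets (completion m)"
  shows "lll (ext_measure M0 R ` A) (ext_measure M0 R ` B)"
  unfolding lll_def
proof
  fix m assume "m \<in> ext_measure M0 R ` A"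
  then obtain a where a: "a \<in> A" "m = ext_measure M0 R a"
    by blast
  then obtain b where "b \<in> B" "absolutely_continuous b a"
    using assms(2) by (auto simp: lll_def)
  then show "\<exists>b\<in>ext_measure M0 R ` B. absolutely_continuous b m"
    using a absolutely_continuous_ext_measure[OF assms(1)] assms(3) by blast
qed

lemma ext_measure_in_sconv:
  assumes space_R: "\<And>r. r \<in> R \<Longrightarrow> space r = space M0" and "R' \<in> sconv M0 Q"
    and Q: "\<And>q. q \<in> Q \<Longrightarrow> sets q = sets M0 \<and> compl_sets M0 R \<subseteq> sets (completion q)"
  shows "compl_sets M0 R \<subseteq> sets (completion R')"
    and "ext_measure M0 R R' \<in> sconv (compl_space M0 R) (ext_measure M0 R ` Q)"
proof -
  obtain q c where R': "space R' = space M0" "sets R' = sets M0" and q: "\<And>n. q n \<in> Q"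
    and c: "\<And>n. 0 \<le> c n" "c sums 1"
    and emeasure_R': "\<And>A. A \<in> sets M0 \<Longrightarrow> emeasure R' A = (\<Sum>n. ennreal (c n) * emeasure (q n) A)"
    using sconvE[OF assms(2)] by metis
  have sets_q: "sets (q n) = sets R'" for n
    using Q q R' by simp
  have emeasure_R'_q: "\<And>B. B \<in> sets R' \<Longrightarrow> emeasure R' B = (\<Sum>n. ennreal (c n) * emeasure (q n) B)"
    using emeasure_R' R' by simp
  have completion_q: "A \<in> sets (completion (q n))" if "A \<in> compl_sets M0 R" for A n
    using Q q that by blast
  have mixture: "A \<in> sets (completion R')"
    "emeasure (completion R') A = (\<Sum>n. ennreal (c n) * emeasure (completion (q n)) A)"
    if A: "A \<in> compl_sets M0 R" for A
    by (rule completion_countable_mixture[of q R' "\<lambda>n. ennreal (c n)"];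
        use sets_q emeasure_R'_q completion_q[OF A] in simp)+
  show compl_R': "compl_sets M0 R \<subseteq> sets (completion R')"
    using mixture(1) by blast
  have "emeasure (ext_measure M0 R R') A = (\<Sum>n. ennreal (c n) * emeasure (ext_measure M0 R (q n)) A)"
    if A: "A \<in> compl_sets M0 R" for A
  proof -
    have "emeasure (ext_measure M0 R R') A = emeasure (completion R') A"
      using emeasure_ext_measure[OF space_R compl_R' A] .
    also have "\<dots> = (\<Sum>n. ennreal (c n) * emeasure (completion (q n)) A)"
      using mixture(2)[OF A] .
    also have "\<dots> = (\<Sum>n. ennreal (c n) * emeasure (ext_measure M0 R (q n)) A)"
      using emeasure_ext_measure[OF space_R _ A] Q q by simp
    finally show ?thesis .
  qed
  then show "ext_measure M0 R R' \<in> sconv (compl_space M0 R) (ext_measure M0 R ` Q)"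
    unfolding sconv_def using space_R compl_R' R' q c
    by (auto simp: sets_ext_measure space_ext_measure sets_compl_space space_compl_space
        intro!: exI[of _ c] exI[of _ "\<lambda>n. ext_measure M0 R (q n)"])
qed

lemma compl_sets_subset_completion_localization:
  assumes "prob_family M0 P" "localization M0 P Q S" "q \<in> Q"
  shows "compl_sets M0 P \<subseteq> sets (completion q)"
  using compl_sets_localization[OF assms(1,2)] assms(3) by (auto simp: compl_sets_def)

lemma inj_on_ext_measure_localization:
  assumes "prob_family M0 P" "localization M0 P Q S"
  shows "inj_on (ext_measure M0 P) Q"
proof (rule inj_on_ext_measure)
  have "prob_family M0 Q"
    using assms(2) by (simp add: localization_def)
  then show "q \<in> Q \<Longrightarrow> sets q = sets M0 \<and> compl_sets M0 P \<subseteq> sets (completion q)" for q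
    using compl_sets_subset_completion_localization[OF assms] prob_familyD by blast
qed (use prob_familyD[OF assms(1)] in blast)

lemma localization_ext_measure:
  assumes P: "prob_family M0 P" and loc: "localization M0 P Q S"
  shows "localization (compl_space M0 P) (ext_measure M0 P ` P) (ext_measure M0 P ` Q)
           (\<lambda>m. S (inv_into Q (ext_measure M0 P) m))"
proof -
  let ?e = "ext_measure M0 P"
  have Q: "prob_family M0 Q" and S: "\<And>q. q \<in> Q \<Longrightarrow> S q \<in> sets M0"
    and S_Q: "\<And>q r. q \<in> Q \<Longrightarrow> r \<in> Q \<Longrightarrow> emeasure q (S r) = (if q = r then 1 else 0)"
    and lll_QP: "lll Q P" and lll_P_sconv: "lll P (sconv M0 Q)"
    using loc by (auto simp: localization_def)
  note P_props = prob_familyD[OF P] and Q_props = prob_familyD[OF Q]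
  have compl_P: "compl_sets M0 P \<subseteq> sets (completion p)" if "p \<in> P" for p
    using that by (auto simp: compl_sets_def)
  note compl_Q = compl_sets_subset_completion_localization[OF P loc]
  have sets_M0: "sets M0 \<subseteq> compl_sets M0 P"
    using sets_subset_compl_sets P_props(3) .
  have S_inv: "S (inv_into Q ?e (?e q)) = S q" "?e q = ?e r \<longleftrightarrow> q = r" if "q \<in> Q" "r \<in> Q" for q r
    using that inj_on_ext_measure_localization[OF P loc] by (simp_all add: inj_on_eq_iff)
  have emeasure_S: "emeasure (?e q) (S r) = emeasure q (S r)" if "q \<in> Q" "r \<in> Q" for q r
  proof -
    have "S r \<in> compl_sets M0 P"
      using sets_M0 S[OF that(2)] by blast
    then have "emeasure (?e q) (S r) = emeasure (completion q) (S r)"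
      by (rule emeasure_ext_measure[of P M0 q, rotated 2]) (use P_props compl_Q[OF that(1)] in auto)
    then show ?thesis
      using S[OF that(2)] Q_props(3)[OF that(1)] by simp
  qed
  have compl_sconv: "compl_sets M0 P \<subseteq> sets (completion R)" if "R \<in> sconv M0 Q" for R
    by (rule ext_measure_in_sconv(1)[OF _ that]) (use P_props Q_props compl_Q in auto)
  have "lll (?e ` P) (?e ` sconv M0 Q)"
    by (rule lll_ext_measure[OF _ lll_P_sconv]) (use P_props compl_P compl_sconv in blast)+
  moreover have "?e ` sconv M0 Q \<subseteq> sconv (compl_space M0 P) (?e ` Q)"
  proof (rule image_subsetI)
    fix R assume "R \<in> sconv M0 Q"
    show "?e R \<in> sconv (compl_space M0 P) (?e ` Q)"
      by (rule ext_measure_in_sconv(2)[OF _ \<open>R \<in> sconv M0 Q\<close>]) (use P_props Q_props compl_Q in auto)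
  qed
  ultimately have lll_P: "lll (?e ` P) (sconv (compl_space M0 P) (?e ` Q))"
    by (rule lll_subset)
  have lll_Q: "lll (?e ` Q) (?e ` P)"
    by (rule lll_ext_measure[OF _ lll_QP]) (use P_props compl_P compl_Q in blast)+
  have supports: "S (inv_into Q ?e m) \<in> sets (compl_space M0 P)" if "m \<in> ?e ` Q" for m
    using that S S_inv(1) sets_M0 P_props by (auto simp: sets_compl_space)
  have supports_emeasure: "emeasure m (S (inv_into Q ?e m')) = (if m = m' then 1 else 0)"
    if "m \<in> ?e ` Q" "m' \<in> ?e ` Q" for m m'
    using that S_Q S_inv emeasure_S by auto
  show ?thesis
    unfolding localization_def
    using prob_family_ext_measure[OF P Q compl_Q] supports supports_emeasure lll_P lll_Q
    by (intro conjI ballI) auto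
qed

lemma (in prob_space) null_sets_compl_of_emeasure_1:
  assumes "A \<in> sets M" "emeasure M A = 1"
  shows "space M - A \<in> null_sets M"
  using assms by (intro null_setsI) (simp_all add: emeasure_compl emeasure_space_1)

text \<open>Under disjoint supports this is equivalent to the Hahn condition; unlike the latter it
  refers only to null sets, which is what lets it pass to the completion.\<close>

definition ae_gluing :: "'a measure \<Rightarrow> 'a measure set \<Rightarrow> ('a measure \<Rightarrow> 'a set) \<Rightarrow> bool" where
  "ae_gluing M Q S \<longleftrightarrow>
     (\<forall>E. (\<forall>q\<in>Q. E q \<in> sets M \<and> E q \<subseteq> S q) \<longrightarrow>
        (\<exists>T\<in>sets M. \<forall>q\<in>Q. E q - T \<in> null_sets q \<and> T - E q \<in> null_sets q))"

lemma ae_gluing_imp_hahn_localization: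
  assumes loc: "localization M P Q S" and glue: "ae_gluing M Q S"
  shows "hahn_localization M P Q S"
  unfolding hahn_localization_def
proof (intro conjI allI impI loc)
  fix E assume E: "\<forall>q\<in>Q. E q \<in> sets M \<and> E q \<subseteq> S q"
  obtain T where T: "T \<in> sets M" "\<And>q. q \<in> Q \<Longrightarrow> E q - T \<in> null_sets q \<and> T - E q \<in> null_sets q"
    using glue[unfolded ae_gluing_def, THEN spec, THEN mp, OF E] by blast
  have sets_Q: "sets q = sets M" if "q \<in> Q" for q
    using loc that by (auto simp: localization_def prob_family_def)
  have "emeasure q (T - F) = 0" if F: "F \<in> sets M" "\<forall>r\<in>Q. emeasure r (E r - F) = 0" and q: "q \<in> Q" for F q
  proof -
    have "E q - F \<in> null_sets q"
      using E F q sets_Q[OF q] by (intro null_setsI) auto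
    then have "(T - E q) \<union> (E q - F) \<in> null_sets q"
      using T(2)[OF q] by blast
    then have "T - F \<in> null_sets q"
      by (rule null_sets_subset) (use T(1) F(1) sets_Q[OF q] in auto)
    then show ?thesis
      by (rule null_setsD1)
  qed
  with T show "\<exists>T\<in>sets M. (\<forall>q\<in>Q. emeasure q (E q - T) = 0) \<and>
      (\<forall>F\<in>sets M. (\<forall>q\<in>Q. emeasure q (E q - F) = 0) \<longrightarrow> (\<forall>q\<in>Q. emeasure q (T - F) = 0))"
    by (blast intro: null_setsD1)
qed

lemma hahn_localization_imp_ae_gluing:
  assumes hahn: "hahn_localization M P Q S" and disj: "disjoint_family_on S Q"
  shows "ae_gluing M Q S"
  unfolding ae_gluing_def
proof (intro allI impI)
  fix E assume E: "\<forall>q\<in>Q. E q \<in> sets M \<and> E q \<subseteq> S q"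
  have loc: "localization M P Q S"
    using hahn by (simp add: hahn_localization_def)
  have Q: "prob_space q" "space q = space M" "sets q = sets M" "S q \<in> sets M" "emeasure q (S q) = 1"
    if "q \<in> Q" for q
    using loc that by (auto simp: localization_def prob_family_def)
  obtain T where T: "T \<in> sets M" "\<And>q. q \<in> Q \<Longrightarrow> emeasure q (E q - T) = 0"
    and T_least: "\<And>F. F \<in> sets M \<Longrightarrow> \<forall>r\<in>Q. emeasure r (E r - F) = 0 \<Longrightarrow>
      \<forall>q\<in>Q. emeasure q (T - F) = 0"
    using hahn[unfolded hahn_localization_def, THEN conjunct2, THEN spec, THEN mp, OF E] by blast
  have "T - E q \<in> null_sets q" if q: "q \<in> Q" for q
  proof -
    \<comment> \<open>\<open>F\<close> cuts \<open>T\<close> down to \<open>E\<^sub>q\<close> inside \<open>S\<^sub>q\<close>; by disjointness it still covers every \<open>E\<^sub>r\<close>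
      a.e., so minimality of \<open>T\<close> gives \<open>T \<subseteq> F\<close> \<open>q\<close>-a.e.\<close>
    define F where "F = T - (S q - E q)"
    have F: "F \<in> sets M"
      using T(1) Q(4)[OF q] E q by (auto simp: F_def)
    have sub: "E r - F \<subseteq> E r - T" if r: "r \<in> Q" for r
    proof (cases "r = q")
      case False
      then have "S r \<inter> S q = {}"
        using disj r q by (auto simp: disjoint_family_on_def)
      then show ?thesis
        using E r by (auto simp: F_def)
    qed (auto simp: F_def)
    have "emeasure r (E r - F) = 0" if r: "r \<in> Q" for r
    proof -
      have "E r - T \<in> null_sets r"
        using T(2)[OF r] E T(1) Q(3)[OF r] r by (intro null_setsI) auto
      then have "E r - F \<in> null_sets r"
        by (rule null_sets_subset) (use E F Q(3)[OF r] r sub[OF r] in auto)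
      then show ?thesis
        by (rule null_setsD1)
    qed
    then have "T - F \<in> null_sets q"
      using T_least[OF F] T(1) F q Q(3)[OF q] by (intro null_setsI) auto
    moreover have "space M - S q \<in> null_sets q"
    proof -
      have "S q \<in> sets q"
        using Q(3,4)[OF q] by simp
      from prob_space.null_sets_compl_of_emeasure_1[OF Q(1)[OF q] this Q(5)[OF q]] show ?thesis
        using Q(2)[OF q] by simp
    qed
    ultimately have "(T - F) \<union> (space M - S q) \<in> null_sets q"
      by blast
    then show ?thesis
      by (rule null_sets_subset) (use sets.sets_into_space[OF T(1)] T(1) E q Q(3)[OF q] in \<open>auto simp: F_def\<close>)
  qed
  moreover have "E q - T \<in> null_sets q" if q: "q \<in> Q" for q
    using T(1,2) E Q(3) q by (intro null_setsI) auto
  ultimately show "\<exists>T\<in>sets M. \<forall>q\<in>Q. E q - T \<in> null_sets q \<and> T - E q \<in> null_sets q"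
    using T(1) by blast
qed

lemma ae_gluing_ext_measure:
  assumes P: "prob_family M0 P" and loc: "localization M0 P Q S" and glue: "ae_gluing M0 Q S"
  shows "ae_gluing (compl_space M0 P) (ext_measure M0 P ` Q) (\<lambda>m. S (inv_into Q (ext_measure M0 P) m))"
  unfolding ae_gluing_def
proof (intro allI impI)
  let ?e = "ext_measure M0 P"
  fix E assume E: "\<forall>m\<in>?e ` Q. E m \<in> sets (compl_space M0 P) \<and> E m \<subseteq> S (inv_into Q ?e m)"
  note P_props = prob_familyD[OF P]
  note compl_Q = compl_sets_subset_completion_localization[OF P loc]
  have sets_Q: "sets q = sets M0" if "q \<in> Q" for q
    using loc that by (auto simp: localization_def prob_family_def)
  have E_q: "E (?e q) \<in> compl_sets M0 P" "E (?e q) \<subseteq> S q" if q: "q \<in> Q" for q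
  proof -
    have "E (?e q) \<in> sets (compl_space M0 P) \<and> E (?e q) \<subseteq> S (inv_into Q ?e (?e q))"
      using E q by blast
    then show "E (?e q) \<in> compl_sets M0 P" "E (?e q) \<subseteq> S q"
      using inv_into_f_f[OF inj_on_ext_measure_localization[OF P loc] q] P_props(2)
      by (simp_all add: sets_compl_space)
  qed
  have "\<exists>L. L \<in> sets M0 \<and> L \<subseteq> E (?e q) \<and> E (?e q) - L \<in> null_sets (completion q)" if q: "q \<in> Q" for q
  proof (rule completion_sandwichE)
    show "E (?e q) \<in> sets (completion q)"
      using E_q(1)[OF q] compl_Q[OF q] by blast
    fix L U assume LU: "L \<in> sets q" "U \<in> sets q" "L \<subseteq> E (?e q)" "E (?e q) \<subseteq> U" "U - L \<in> null_sets q"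
    have "E (?e q) - L \<in> null_sets (completion q)"
      by (rule null_sets_completion_subset[OF _ null_sets_completionI[OF LU(5)]]) (use LU(4) in blast)
    then show ?thesis
      using LU(1,3) sets_Q[OF q] by blast
  qed
  then obtain L where L: "\<And>q. q \<in> Q \<Longrightarrow> L q \<in> sets M0 \<and> L q \<subseteq> E (?e q) \<and> E (?e q) - L q \<in> null_sets (completion q)"
    by metis
  have "\<forall>q\<in>Q. L q \<in> sets M0 \<and> L q \<subseteq> S q"
    using L E_q(2) by blast
  from glue[unfolded ae_gluing_def, THEN spec, THEN mp, OF this]
  obtain T where T: "T \<in> sets M0" "\<And>q. q \<in> Q \<Longrightarrow> L q - T \<in> null_sets q \<and> T - L q \<in> null_sets q"
    by blast
  have T_compl: "T \<in> compl_sets M0 P"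
    using T(1) sets_subset_compl_sets P_props(3) by blast
  have "E m - T \<in> null_sets m \<and> T - E m \<in> null_sets m" if m: "m \<in> ?e ` Q" for m
  proof -
    obtain q where q: "q \<in> Q" "m = ?e q"
      using m by blast
    have null_sets_e: "null_sets (?e q) = compl_sets M0 P \<inter> null_sets (completion q)"
      using null_sets_ext_measure[of P M0 q] P_props compl_Q[OF q(1)] by simp
    have diff_compl: "E (?e q) - T \<in> compl_sets M0 P" "T - E (?e q) \<in> compl_sets M0 P"
      using sets.Diff[of _ "compl_space M0 P"] E_q(1)[OF q(1)] T_compl P_props
      by (simp_all add: sets_compl_space)
    have subsets: "E (?e q) - T \<subseteq> (E (?e q) - L q) \<union> (L q - T)" "T - E (?e q) \<subseteq> T - L q"
      using L[OF q(1)] by auto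
    have L_T: "L q - T \<in> null_sets (completion q)" "T - L q \<in> null_sets (completion q)"
      using T(2)[OF q(1)] by (simp_all add: null_sets_completionI)
    then have "(E (?e q) - L q) \<union> (L q - T) \<in> null_sets (completion q)"
      using L[OF q(1)] by (intro null_sets.Un) simp_all
    with diff_compl subsets L_T(2) show ?thesis
      unfolding q(2) null_sets_e by (meson IntI null_sets_completion_subset)
  qed
  then show "\<exists>T\<in>sets (compl_space M0 P). \<forall>m\<in>?e ` Q.
      E m - T \<in> null_sets m \<and> T - E m \<in> null_sets m"
    using T_compl P_props by (auto simp: sets_compl_space)
qed

theorem lemma3p6:
  fixes M0 :: "'a measure" and P Q :: "'a measure set" and S :: "'a measure \<Rightarrow> 'a set"
  assumes "prob_family M0 P"
    and "localization M0 P Q S"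
  shows "compl_sets M0 P = compl_sets M0 Q \<and>
         pre_hahn_localizable (compl_space M0 P) (ext_measure M0 P ` P) \<and>
         ((\<exists>Q' S'. hahn_localization M0 P Q' S' \<and> disjoint_family_on S' Q') \<longrightarrow>
           hahn_localizable (compl_space M0 P) (ext_measure M0 P ` P))"
proof (intro conjI impI)
  show "compl_sets M0 P = compl_sets M0 Q"
    using compl_sets_localization[OF assms] .
  have prob_family_ext: "prob_family (compl_space M0 P) (ext_measure M0 P ` P)"
    using prob_family_ext_measure[OF assms(1) assms(1)] by (auto simp: compl_sets_def)
  then show "pre_hahn_localizable (compl_space M0 P) (ext_measure M0 P ` P)"
    unfolding pre_hahn_localizable_def using localization_ext_measure[OF assms] by blast
  assume "\<exists>Q' S'. hahn_localization M0 P Q' S' \<and> disjoint_family_on S' Q'"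
  then obtain Q' S' where hahn: "hahn_localization M0 P Q' S'" and disj: "disjoint_family_on S' Q'"
    by blast
  have loc': "localization M0 P Q' S'"
    using hahn by (simp add: hahn_localization_def)
  have "hahn_localization (compl_space M0 P) (ext_measure M0 P ` P) (ext_measure M0 P ` Q')
      (\<lambda>m. S' (inv_into Q' (ext_measure M0 P) m))"
    using localization_ext_measure[OF assms(1) loc']
      ae_gluing_ext_measure[OF assms(1) loc' hahn_localization_imp_ae_gluing[OF hahn disj]]
    by (rule ae_gluing_imp_hahn_localization)
  with prob_family_ext show "hahn_localizable (compl_space M0 P) (ext_measure M0 P ` P)"
    unfolding hahn_localizable_def by blast
qed

end
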